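(* Let $q\ge3$, $G\in\mathbb G^q$, and let $C$ be the core of $S=\Psi(G)$. Suppose every white vertex of $C$ either has valency strictly smaller than $q$ in $C$, or is incident in $C$ to a core-chain containing at least one internal white vertex. Then $G$ is an SYK graph.
   Context: Fix an integer $q\ge 2$. A $(q+1)$-edge-colored graph (colored graph) is a finite connected graph, multiple edges allowed and no loops, whose edges carry colors in $\{0,1,\dots,q\}$ such that every vertex is incident to exactly one edge of each color. It is rooted if one color-0 edge is distinguished and oriented; it is bipartite if its vertices can be colored black and white so that every edge joins a black and a white vertex, with the convention that the origin of the root edge is black. $\mathbb G^q$ denotes the set of rooted bipartite colored graphs. $G_{\hat 0}$ denotes the graph obtained from $G$ by deleting all color-0 edges; $G$ is an SYK graph if $G_{\hat 0}$ is connected. Constellations: given $G\in\mathbb G^q$, its constellation $S=\Psi(G)$ is obtained as follows: orient every edge from its black to its white endpoint; contract every color-0 edge into a single vertex, called a white vertex of $S$ (the one coming from the root edge is the root vertex). For each $i\in\{1,\dots,q\}$ the color-$i$ edges now form directed cycles; for each such cycle, passing through white vertices $w_1,\dots,w_p$ in this cyclic order, add a new vertex of color $i$ joined by one color-$i$ edge to each $w_k$, equip the new vertex with the cyclic order $(w_1,\dots,w_p)$ of its incident edges, and delete the original color-$i$ edges of the cycle. Core: the core $C$ of $S$ is obtained by repeatedly deleting a vertex of degree $1$ other than the root vertex, together with its incident edge, until every non-root vertex has degree at least 2. A chain-vertex of $C$ is a non-root vertex of degree $2$ in $C$; a core-chain is a path of $C$ (possibly closed) whose internal vertices are chain-vertices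 and whose extremities are not chain-vertices. *)

theory Defs
  imports Main
begin

text \<open>
Encoding of a rooted bipartite (q+1)-edge-colored graph G:
black vertices Bl, white vertices Wh (disjoint, finite); for each colour i in {0..q}
the colour-i edges form a perfect matching between Bl and Wh, encoded by the
bijection sig i : Bl -> Wh (the colour-i edge at black b joins b to sig i b).
Multiple edges are allowed (sig i b = sig j b for i ~= j), loops are impossible.
The root is the colour-0 edge at the black vertex r, oriented from r (black) to sig 0 r.
\<close>

definition col_edges :: "nat set \<Rightarrow> 'v set \<Rightarrow> (nat \<Rightarrow> 'v \<Rightarrow> 'v) \<Rightarrow> ('v \<times> 'v) set" where
  "col_edges cols Bl sig = {(b, sig i b) | i b. i \<in> cols \<and> b \<in> Bl}"

definition col_connected :: "nat set \<Rightarrow> 'v set \<Rightarrow> 'v set \<Rightarrow> (nat \<Rightarrow> 'v \<Rightarrow> 'v) \<Rightarrow> bool" where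
  "col_connected cols Bl Wh sig \<longleftrightarrow>
     (\<forall>x \<in> Bl \<union> Wh. \<forall>y \<in> Bl \<union> Wh.
        (x, y) \<in> (col_edges cols Bl sig \<union> (col_edges cols Bl sig)\<inverse>)\<^sup>*)"

definition rooted_bip_colored ::
  "nat \<Rightarrow> 'v set \<Rightarrow> 'v set \<Rightarrow> (nat \<Rightarrow> 'v \<Rightarrow> 'v) \<Rightarrow> 'v \<Rightarrow> bool" where
  "rooted_bip_colored q Bl Wh sig r \<longleftrightarrow>
     finite Bl \<and> finite Wh \<and> Bl \<inter> Wh = {} \<and>
     (\<forall>i \<le> q. bij_betw (sig i) Bl Wh) \<and>
     r \<in> Bl \<and> col_connected {0..q} Bl Wh sig"

definition SYK :: "nat \<Rightarrow> 'v set \<Rightarrow> 'v set \<Rightarrow> (nat \<Rightarrow> 'v \<Rightarrow> 'v) \<Rightarrow> bool" where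
  "SYK q Bl Wh sig \<longleftrightarrow> col_connected {1..q} Bl Wh sig"

text \<open>Contracting colour-0 edges identifies each white vertex of S with the
black endpoint of its colour-0 edge. The colour-i directed cycles then are the cycles of
the permutation pi i = (sig 0)^-1 o sig i of Bl.\<close>

definition cperm :: "'v set \<Rightarrow> (nat \<Rightarrow> 'v \<Rightarrow> 'v) \<Rightarrow> nat \<Rightarrow> 'v \<Rightarrow> 'v" where
  "cperm Bl sig i = inv_into Bl (sig 0) \<circ> sig i"

definition corbit :: "'v set \<Rightarrow> (nat \<Rightarrow> 'v \<Rightarrow> 'v) \<Rightarrow> nat \<Rightarrow> 'v \<Rightarrow> 'v set" where
  "corbit Bl sig i b = {(cperm Bl sig i ^^ n) b | n. True}"

text \<open>Vertices of S: white vertices SW b (b the black end of a colour-0 edge), and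
colour-i vertices SC i O (O the set of white vertices on a colour-i cycle).\<close>
datatype 'v svert = SW 'v | SC nat "'v set"

definition S_verts :: "nat \<Rightarrow> 'v set \<Rightarrow> (nat \<Rightarrow> 'v \<Rightarrow> 'v) \<Rightarrow> 'v svert set" where
  "S_verts q Bl sig = SW ` Bl \<union> {SC i (corbit Bl sig i b) | i b. 1 \<le> i \<and> i \<le> q \<and> b \<in> Bl}"

definition S_adj :: "nat \<Rightarrow> 'v set \<Rightarrow> (nat \<Rightarrow> 'v \<Rightarrow> 'v) \<Rightarrow> 'v svert \<Rightarrow> 'v svert \<Rightarrow> bool" where
  "S_adj q Bl sig x y \<longleftrightarrow>
     (\<exists>i b. 1 \<le> i \<and> i \<le> q \<and> b \<in> Bl \<and>
        ((x = SW b \<and> y = SC i (corbit Bl sig i b)) \<or> (y = SW b \<and> x = SC i (corbit Bl sig i b))))"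

text \<open>S is a simple graph, and deleting vertices with their incident edges leaves an
induced subgraph; hence a subgraph obtained by pruning is described by its vertex set U.\<close>

definition sdeg :: "nat \<Rightarrow> 'v set \<Rightarrow> (nat \<Rightarrow> 'v \<Rightarrow> 'v) \<Rightarrow> 'v svert set \<Rightarrow> 'v svert \<Rightarrow> nat" where
  "sdeg q Bl sig U v = card {u \<in> U. S_adj q Bl sig v u}"

definition prune_step ::
  "nat \<Rightarrow> 'v set \<Rightarrow> (nat \<Rightarrow> 'v \<Rightarrow> 'v) \<Rightarrow> 'v \<Rightarrow> 'v svert set \<Rightarrow> 'v svert set \<Rightarrow> bool" where
  "prune_step q Bl sig r U U' \<longleftrightarrow>
     (\<exists>v \<in> U. v \<noteq> SW r \<and> sdeg q Bl sig U v = 1 \<and> U' = U - {v})"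

definition is_core :: "nat \<Rightarrow> 'v set \<Rightarrow> (nat \<Rightarrow> 'v \<Rightarrow> 'v) \<Rightarrow> 'v \<Rightarrow> 'v svert set \<Rightarrow> bool" where
  "is_core q Bl sig r U \<longleftrightarrow>
     (prune_step q Bl sig r)\<^sup>*\<^sup>* (S_verts q Bl sig) U \<and> \<not> (\<exists>U'. prune_step q Bl sig r U U')"

definition chain_vertex ::
  "nat \<Rightarrow> 'v set \<Rightarrow> (nat \<Rightarrow> 'v \<Rightarrow> 'v) \<Rightarrow> 'v \<Rightarrow> 'v svert set \<Rightarrow> 'v svert \<Rightarrow> bool" where
  "chain_vertex q Bl sig r U v \<longleftrightarrow> v \<in> U \<and> v \<noteq> SW r \<and> sdeg q Bl sig U v = 2"

definition core_chain ::
  "nat \<Rightarrow> 'v set \<Rightarrow> (nat \<Rightarrow> 'v \<Rightarrow> 'v) \<Rightarrow> 'v \<Rightarrow> 'v svert set \<Rightarrow> 'v svert list \<Rightarrow> bool" where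
  "core_chain q Bl sig r U vs \<longleftrightarrow>
     2 \<le> length vs \<and> set vs \<subseteq> U \<and>
     (\<forall>j < length vs - 1. S_adj q Bl sig (vs ! j) (vs ! (j + 1))) \<and>
     distinct (map (\<lambda>j. {vs ! j, vs ! (j + 1)}) [0..<length vs - 1]) \<and>
     distinct (butlast (tl vs)) \<and>
     hd vs \<notin> set (butlast (tl vs)) \<and> last vs \<notin> set (butlast (tl vs)) \<and>
     (\<forall>v \<in> set (butlast (tl vs)). chain_vertex q Bl sig r U v) \<and>
     \<not> chain_vertex q Bl sig r U (hd vs) \<and> \<not> chain_vertex q Bl sig r U (last vs)"

end

theory Submission
  imports Defs "HOL-Combinatorics.Orbits"
begin

(* If G with its colour-0 edges deleted is disconnected, some colour-0 edge joins two of its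
   components; call its black end separating. A colour-i cycle of the constellation through a
   separating vertex alternates colour-i edges with colour-0 edges, so it has to cross the cut a
   second time: every colour-i vertex of S next to a separating white vertex has a second
   separating white neighbour. Separating white vertices (of valency q) and their neighbours
   therefore span a subgraph of S of minimum degree 2, which survives pruning and lies in the
   core. A core-chain leaving a separating white vertex w passes through a colour vertex of
   degree 2, whose other neighbour is again separating, hence of valency q >= 3 and an
   extremity of the chain. So that chain has no internal white vertex, while w has valency q. *)

definition col_conn :: "nat set \<Rightarrow> 'v set \<Rightarrow> (nat \<Rightarrow> 'v \<Rightarrow> 'v) \<Rightarrow> ('v \<times> 'v) set" where
  "col_conn cols Bl sig = (col_edges cols Bl sig \<union> (col_edges cols Bl sig)\<inverse>)\<^sup>*"

lemma col_connected_iff_col_conn: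
  "col_connected cols Bl Wh sig \<longleftrightarrow> (\<forall>x \<in> Bl \<union> Wh. \<forall>y \<in> Bl \<union> Wh. (x, y) \<in> col_conn cols Bl sig)"
  unfolding col_connected_def col_conn_def ..

lemma col_conn_refl: "(x, x) \<in> col_conn cols Bl sig"
  unfolding col_conn_def by simp

lemma col_conn_sym: "(x, y) \<in> col_conn cols Bl sig \<Longrightarrow> (y, x) \<in> col_conn cols Bl sig"
  unfolding col_conn_def by (metis sym_Un_converse sym_rtrancl symD)

lemma col_conn_trans:
  "(x, y) \<in> col_conn cols Bl sig \<Longrightarrow> (y, z) \<in> col_conn cols Bl sig \<Longrightarrow> (x, z) \<in> col_conn cols Bl sig"
  unfolding col_conn_def by (rule rtrancl_trans)

lemma col_conn_edge: "i \<in> cols \<Longrightarrow> b \<in> Bl \<Longrightarrow> (b, sig i b) \<in> col_conn cols Bl sig"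
  unfolding col_conn_def col_edges_def by (rule r_into_rtrancl) auto

lemma col_connected_remove_colour:
  assumes "col_connected (insert j cols) Bl Wh sig"
    and "\<forall>b \<in> Bl. (b, sig j b) \<in> col_conn cols Bl sig"
  shows "col_connected cols Bl Wh sig"
proof -
  let ?E = "col_edges (insert j cols) Bl sig"
  have "?E \<subseteq> col_conn cols Bl sig"
    using assms(2) col_conn_edge by (fastforce simp: col_edges_def)
  then have "?E \<union> ?E\<inverse> \<subseteq> col_conn cols Bl sig"
    by (auto intro: col_conn_sym)
  then have "(?E \<union> ?E\<inverse>)\<^sup>* \<subseteq> (col_conn cols Bl sig)\<^sup>*"
    by (rule rtrancl_mono)
  then have "col_conn (insert j cols) Bl sig \<subseteq> col_conn cols Bl sig"
    by (simp add: col_conn_def)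
  then show ?thesis
    using assms(1) unfolding col_connected_iff_col_conn by blast
qed

definition separating :: "nat \<Rightarrow> 'v set \<Rightarrow> (nat \<Rightarrow> 'v \<Rightarrow> 'v) \<Rightarrow> 'v \<Rightarrow> bool" where
  "separating q Bl sig b \<longleftrightarrow> b \<in> Bl \<and> (b, sig 0 b) \<notin> col_conn {1..q} Bl sig"

lemma not_SYK_imp_separating:
  assumes "rooted_bip_colored q Bl Wh sig r" and "\<not> SYK q Bl Wh sig"
  obtains b where "separating q Bl sig b"
proof -
  have "{0..q} = insert 0 {1..q}"
    by auto
  then have "col_connected (insert 0 {1..q}) Bl Wh sig"
    using assms(1) unfolding rooted_bip_colored_def by simp
  with assms(2) show ?thesis
    using col_connected_remove_colour that unfolding SYK_def separating_def by blast
qed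

lemma self_in_orbit_if_inj_on:
  assumes "finite A" "f ` A \<subseteq> A" "inj_on f A" "x \<in> A"
  shows "x \<in> orbit f x"
proof -
  let ?O = "range (\<lambda>n. (f ^^ n) x)"
  have "(f ^^ n) x \<in> A" for n
    using assms(2,4) by (induction n) auto
  then have "?O \<subseteq> A"
    by blast
  moreover have "f ` ?O \<subseteq> ?O"
  proof clarify
    fix n
    show "f ((f ^^ n) x) \<in> ?O"
      using rangeI[of "\<lambda>n. (f ^^ n) x" "Suc n"] by simp
  qed
  ultimately have "f ` ?O = ?O"
    using endo_inj_surj[of ?O f] finite_subset[OF _ assms(1)] inj_on_subset[OF assms(3)] by blast
  moreover have "x \<in> ?O"
    by (rule range_eqI[of _ _ 0]) simp
  ultimately have "x \<in> f ` ?O"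
    by simp
  then obtain y where "x = f y" "y \<in> ?O"
    by (rule imageE)
  from \<open>y \<in> ?O\<close> obtain n where "y = (f ^^ n) x"
    by (rule rangeE)
  then have "x = (f ^^ Suc n) x"
    using \<open>x = f y\<close> by simp
  then show ?thesis
    using zero_less_Suc[of n] unfolding orbit_altdef by blast
qed

lemma
  assumes "bij_betw (sig 0) Bl Wh" "bij_betw (sig i) Bl Wh" "c \<in> Bl"
  shows cperm_in: "cperm Bl sig i c \<in> Bl"
    and sig0_cperm: "sig 0 (cperm Bl sig i c) = sig i c"
proof -
  have "sig i c \<in> sig 0 ` Bl"
    using assms by (metis bij_betw_apply bij_betw_imp_surj_on)
  then show "cperm Bl sig i c \<in> Bl" "sig 0 (cperm Bl sig i c) = sig i c"
    unfolding cperm_def by (simp_all add: inv_into_into f_inv_into_f)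
qed

lemma inj_on_cperm:
  assumes "bij_betw (sig 0) Bl Wh" "bij_betw (sig i) Bl Wh"
  shows "inj_on (cperm Bl sig i) Bl"
proof -
  have "inj_on (inv_into Bl (sig 0)) (sig i ` Bl)"
    using assms by (metis bij_betw_imp_surj_on inj_on_inv_into subset_refl)
  then show ?thesis
    unfolding cperm_def using assms(2) bij_betw_imp_inj_on comp_inj_on by blast
qed

(* A colour-i edge followed by a colour-0 edge leads from y to cperm y. *)
lemma separating_cperm_iff:
  assumes "rooted_bip_colored q Bl Wh sig r" "1 \<le> i" "i \<le> q" "y \<in> Bl"
  shows "separating q Bl sig (cperm Bl sig i y) \<longleftrightarrow> (y, cperm Bl sig i y) \<notin> col_conn {1..q} Bl sig"
proof -
  let ?C = "col_conn {1..q} Bl sig" and ?c = "cperm Bl sig i y"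
  have bij: "bij_betw (sig 0) Bl Wh" "bij_betw (sig i) Bl Wh"
    using assms(1,3) unfolding rooted_bip_colored_def by auto
  have "(y, sig 0 ?c) \<in> ?C"
    using sig0_cperm[OF bij assms(4)] col_conn_edge[of i "{1..q}" y] assms(2-4) by simp
  then have "(?c, sig 0 ?c) \<in> ?C \<longleftrightarrow> (y, ?c) \<in> ?C"
    by (meson col_conn_sym col_conn_trans)
  then show ?thesis
    unfolding separating_def using cperm_in[OF bij assms(4)] by blast
qed

lemma separating_in_cycle:
  assumes rb: "rooted_bip_colored q Bl Wh sig r" and i: "1 \<le> i" "i \<le> q"
    and b: "separating q Bl sig b"
  obtains c where "c \<noteq> b" "separating q Bl sig c" "corbit Bl sig i c = corbit Bl sig i b"
proof -
  let ?f = "cperm Bl sig i" and ?C = "col_conn {1..q} Bl sig"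
  have bij: "bij_betw (sig 0) Bl Wh" "bij_betw (sig i) Bl Wh"
    using rb i unfolding rooted_bip_colored_def by auto
  have "b \<in> Bl"
    using b unfolding separating_def by simp
  have closed: "?f ` Bl \<subseteq> Bl"
    using cperm_in[OF bij] by blast
  have periodic: "c \<in> orbit ?f c" if "c \<in> Bl" for c
    using self_in_orbit_if_inj_on[OF _ closed inj_on_cperm[OF bij] that] rb
    unfolding rooted_bip_colored_def by simp
  have orbit_Bl: "c \<in> Bl" if "c \<in> orbit ?f b" for c
    using that by (induction rule: orbit.induct) (use closed \<open>b \<in> Bl\<close> in auto)
  have corbit_eq: "corbit Bl sig i c = corbit Bl sig i b" if "c \<in> orbit ?f b" for c
  proof -
    have "cyclic_on ?f (orbit ?f b)"
      unfolding cyclic_on_def using periodic[OF \<open>b \<in> Bl\<close>] by blast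
    then have "orbit ?f c = orbit ?f b"
      using that by (rule orbit_cyclic_eq3)
    then show ?thesis
      unfolding corbit_def
      using orbit_altdef_self_in[OF periodic] orbit_Bl[OF that] \<open>b \<in> Bl\<close> by simp
  qed
  have "\<exists>c. c \<noteq> b \<and> separating q Bl sig c \<and> corbit Bl sig i c = corbit Bl sig i b"
  proof (rule ccontr)
    assume no_other: "\<not> ?thesis"
    have nonsep: "\<not> separating q Bl sig c" if "c \<in> orbit ?f b" "c \<noteq> b" for c
      using no_other that corbit_eq by blast
    have extend: "(b, ?f y) \<in> ?C" if "y \<in> Bl" "(b, y) \<in> ?C" "?f y \<in> orbit ?f b" for y
    proof (cases "?f y = b")
      case False
      then have "(y, ?f y) \<in> ?C"
        using nonsep that separating_cperm_iff[OF rb i] by blast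
      then show ?thesis
        by (rule col_conn_trans[OF that(2)])
    qed (simp add: col_conn_refl)
    have reach: "(b, c) \<in> ?C" if "c \<in> orbit ?f b" for c
      using that
    proof (induction rule: orbit.induct)
      case base
      show ?case
        by (rule extend[OF \<open>b \<in> Bl\<close> col_conn_refl orbit.base])
    next
      case (step y)
      show ?case
        by (rule extend[OF orbit_Bl[OF step.hyps] step.IH orbit.step[OF step.hyps]])
    qed
    from periodic[OF \<open>b \<in> Bl\<close>] obtain y where y: "y \<in> Bl" "(b, y) \<in> ?C" "?f y = b"
    proof (cases rule: orbit.cases)
      case base
      then show thesis
        by (intro that[OF \<open>b \<in> Bl\<close> col_conn_refl]) simp
    next
      case (step y)
      then show thesis
        by (intro that[OF orbit_Bl reach]) simp_all
    qed
    have "(y, ?f y) \<in> ?C"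
      using col_conn_sym[OF y(2)] y(3) by simp
    then have "\<not> separating q Bl sig (?f y)"
      using separating_cperm_iff[OF rb i y(1)] by simp
    then show False
      using b y(3) by simp
  qed
  then show thesis
    using that by blast
qed

lemma S_adj_SW_iff:
  "S_adj q Bl sig (SW b) u \<longleftrightarrow> b \<in> Bl \<and> (\<exists>i. 1 \<le> i \<and> i \<le> q \<and> u = SC i (corbit Bl sig i b))"
  unfolding S_adj_def by auto

lemma S_adj_SC_imp: "S_adj q Bl sig (SC i X) u \<Longrightarrow> u \<in> SW ` Bl"
  unfolding S_adj_def by auto

lemma S_adj_commute: "S_adj q Bl sig x y \<longleftrightarrow> S_adj q Bl sig y x"
  unfolding S_adj_def by blast

lemma S_adj_SC_SW: "1 \<le> i \<Longrightarrow> i \<le> q \<Longrightarrow> b \<in> Bl \<Longrightarrow> S_adj q Bl sig (SC i (corbit Bl sig i b)) (SW b)"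
  unfolding S_adj_def by blast

lemma finite_S_verts: "finite Bl \<Longrightarrow> finite (S_verts q Bl sig)"
proof -
  assume "finite Bl"
  have "{SC i (corbit Bl sig i b) | i b. 1 \<le> i \<and> i \<le> q \<and> b \<in> Bl}
      \<subseteq> (\<lambda>(i, b). SC i (corbit Bl sig i b)) ` ({1..q} \<times> Bl)"
    by auto
  moreover have "finite ((\<lambda>(i, b). SC i (corbit Bl sig i b)) ` ({1..q} \<times> Bl))"
    using \<open>finite Bl\<close> by simp
  ultimately show ?thesis
    using \<open>finite Bl\<close> unfolding S_verts_def by (simp add: finite_subset)
qed

lemma sdeg_mono: "finite U \<Longrightarrow> V \<subseteq> U \<Longrightarrow> sdeg q Bl sig V v \<le> sdeg q Bl sig U v"
  unfolding sdeg_def by (rule card_mono) auto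

lemma prune_steps_subset: "(prune_step q Bl sig r)\<^sup>*\<^sup>* X U \<Longrightarrow> U \<subseteq> X"
  by (induction rule: rtranclp_induct) (auto simp: prune_step_def)

lemma prune_steps_keep_min_degree_2:
  assumes "(prune_step q Bl sig r)\<^sup>*\<^sup>* X U" "finite X" "H \<subseteq> X"
    and "\<forall>v \<in> H. 2 \<le> sdeg q Bl sig H v"
  shows "H \<subseteq> U"
  using assms(1)
proof (induction rule: rtranclp_induct)
  case base
  show ?case
    by (fact assms(3))
next
  case (step U U')
  obtain v where v: "sdeg q Bl sig U v = 1" "U' = U - {v}"
    using step.hyps(2) unfolding prune_step_def by blast
  have "finite U"
    using prune_steps_subset[OF step.hyps(1)] assms(2) by (rule finite_subset)
  then have "sdeg q Bl sig H v \<le> 1"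
    using sdeg_mono[OF _ step.IH] v(1) by metis
  then have "v \<notin> H"
    using assms(4) by fastforce
  then show ?case
    using step.IH v(2) by blast
qed

definition separating_part :: "nat \<Rightarrow> 'v set \<Rightarrow> (nat \<Rightarrow> 'v \<Rightarrow> 'v) \<Rightarrow> 'v svert set" where
  "separating_part q Bl sig =
     {SW b | b. separating q Bl sig b} \<union>
     {SC i (corbit Bl sig i b) | i b. 1 \<le> i \<and> i \<le> q \<and> separating q Bl sig b}"

lemma sdeg_SW_separating:
  assumes "separating_part q Bl sig \<subseteq> U" "separating q Bl sig b"
  shows "sdeg q Bl sig U (SW b) = q"
proof -
  have "b \<in> Bl"
    using assms(2) unfolding separating_def by simp
  have "SC i (corbit Bl sig i b) \<in> U" if "i \<in> {1..q}" for i
    using assms(1) that assms(2) unfolding separating_part_def by auto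
  moreover have "S_adj q Bl sig (SW b) u \<longleftrightarrow> u \<in> (\<lambda>i. SC i (corbit Bl sig i b)) ` {1..q}" for u
    using \<open>b \<in> Bl\<close> unfolding S_adj_SW_iff by auto
  ultimately have "{u \<in> U. S_adj q Bl sig (SW b) u} = (\<lambda>i. SC i (corbit Bl sig i b)) ` {1..q}"
    by blast
  moreover have "inj_on (\<lambda>i. SC i (corbit Bl sig i b)) {1..q}"
    by (auto simp: inj_on_def)
  ultimately show ?thesis
    unfolding sdeg_def by (simp add: card_image)
qed

lemma finite_S_neighbours_SC: "finite Bl \<Longrightarrow> finite {u \<in> U. S_adj q Bl sig (SC i X) u}"
  using S_adj_SC_imp by (metis (no_types, lifting) finite_imageI finite_subset mem_Collect_eq subsetI)

lemma separating_SW_neighbour: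
  assumes "separating_part q Bl sig \<subseteq> U" "1 \<le> i" "i \<le> q" "separating q Bl sig x"
  shows "SW x \<in> {u \<in> U. S_adj q Bl sig (SC i (corbit Bl sig i x)) u}"
proof -
  have "SW x \<in> U"
    using assms(1,4) unfolding separating_part_def by blast
  moreover have "x \<in> Bl"
    using assms(4) unfolding separating_def by simp
  ultimately show ?thesis
    using S_adj_SC_SW[OF assms(2,3)] by simp
qed

lemma sdeg_SC_separating:
  assumes rb: "rooted_bip_colored q Bl Wh sig r" and H: "separating_part q Bl sig \<subseteq> U"
    and i: "1 \<le> i" "i \<le> q" and b: "separating q Bl sig b"
  shows "2 \<le> sdeg q Bl sig U (SC i (corbit Bl sig i b))"
proof -
  obtain c where c: "c \<noteq> b" "separating q Bl sig c" "corbit Bl sig i c = corbit Bl sig i b"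
    using separating_in_cycle[OF rb i b] .
  let ?N = "{u \<in> U. S_adj q Bl sig (SC i (corbit Bl sig i b)) u}"
  have "finite ?N"
    using rb finite_S_neighbours_SC unfolding rooted_bip_colored_def by blast
  moreover have "{SW b, SW c} \<subseteq> ?N"
    using separating_SW_neighbour[OF H i b] separating_SW_neighbour[OF H i c(2)] c(3) by simp
  ultimately have "card {SW b, SW c} \<le> card ?N"
    by (rule card_mono)
  then show ?thesis
    using c(1) unfolding sdeg_def by simp
qed

lemma separating_part_subset_core:
  assumes "rooted_bip_colored q Bl Wh sig r" "2 \<le> q" "is_core q Bl sig r U"
  shows "separating_part q Bl sig \<subseteq> U"
proof (rule prune_steps_keep_min_degree_2)
  show "(prune_step q Bl sig r)\<^sup>*\<^sup>* (S_verts q Bl sig) U"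
    using assms(3) unfolding is_core_def by simp
  show "finite (S_verts q Bl sig)"
    using assms(1) finite_S_verts unfolding rooted_bip_colored_def by blast
  show "separating_part q Bl sig \<subseteq> S_verts q Bl sig"
    unfolding separating_part_def S_verts_def separating_def by blast
  show "\<forall>v \<in> separating_part q Bl sig. 2 \<le> sdeg q Bl sig (separating_part q Bl sig) v"
  proof
    fix v
    assume "v \<in> separating_part q Bl sig"
    then consider (white) b where "v = SW b" "separating q Bl sig b"
      | (colour) i b where "v = SC i (corbit Bl sig i b)" "1 \<le> i" "i \<le> q" "separating q Bl sig b"
      unfolding separating_part_def by blast
    then show "2 \<le> sdeg q Bl sig (separating_part q Bl sig) v"
    proof cases
      case white
      then show ?thesis
        using sdeg_SW_separating[OF subset_refl white(2)] assms(2) by simp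
    next
      case colour
      then show ?thesis
        using sdeg_SC_separating[OF assms(1) subset_refl] by simp
    qed
  qed
qed

lemma butlast_tl_rev: "butlast (tl (rev xs)) = rev (butlast (tl xs))"
proof (cases xs rule: rev_cases)
  case (snoc ys z)
  then show ?thesis
    by (cases ys) simp_all
qed simp

lemma core_chain_successively: "core_chain q Bl sig r U vs \<Longrightarrow> successively (S_adj q Bl sig) vs"
  unfolding core_chain_def successively_conv_nth by (simp add: less_diff_conv)

lemma core_chain_end:
  assumes chain: "core_chain q Bl sig r U vs" and w: "w = hd vs \<or> w = last vs" "w \<in> SW ` Bl"
    and white: "\<exists>u \<in> set (butlast (tl vs)). u \<in> SW ` Bl"
  obtains y z where "S_adj q Bl sig w y" "S_adj q Bl sig y z" "z \<noteq> w"
    "chain_vertex q Bl sig r U y" "chain_vertex q Bl sig r U z"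
proof -
  let ?I = "set (butlast (tl vs))"
  have I: "\<forall>v \<in> ?I. chain_vertex q Bl sig r U v" "w \<notin> ?I" "2 \<le> length vs"
    using chain w(1) unfolding core_chain_def by auto
  obtain ws where ws: "hd ws = w" "successively (S_adj q Bl sig) ws" "set (butlast (tl ws)) = ?I"
    "2 \<le> length ws"
  proof (cases "w = hd vs")
    case True
    then show thesis
      using that core_chain_successively[OF chain] I(3) by blast
  next
    case False
    have flip: "(\<lambda>x y. S_adj q Bl sig y x) = S_adj q Bl sig"
      by (intro ext) (rule S_adj_commute)
    have "successively (S_adj q Bl sig) (rev vs)"
      unfolding successively_rev flip by (rule core_chain_successively[OF chain])
    moreover have "hd (rev vs) = w"
      using False w(1) by (simp add: hd_rev)
    ultimately show thesis
      using that[of "rev vs"] I(3) by (simp add: butlast_tl_rev)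
  qed
  obtain y rest where ws_eq: "ws = w # y # rest"
    using ws(1,4) by (cases ws rule: remdups_adj.cases) auto
  have "rest \<noteq> []"
    using white ws(3) ws_eq by auto
  then obtain z rest' where rest: "rest = z # rest'"
    by (cases rest) auto
  have adj: "S_adj q Bl sig w y" "S_adj q Bl sig y z"
    using ws(2) ws_eq rest by simp_all
  have "y \<notin> SW ` Bl"
    using adj(1) w(2) by (auto simp: S_adj_SW_iff)
  then have "rest' \<noteq> []"
    using white ws(3) ws_eq rest by auto
  then have "y \<in> ?I" "z \<in> ?I"
    using ws(3) ws_eq rest by (auto simp flip: ws(3))
  then show thesis
    using that adj I(1,2) by blast
qed

lemma sdeg_beyond_separating_neighbour:
  assumes rb: "rooted_bip_colored q Bl Wh sig r" and H: "separating_part q Bl sig \<subseteq> U"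
    and b: "separating q Bl sig b"
    and adj: "S_adj q Bl sig (SW b) y" "S_adj q Bl sig y z"
    and z: "z \<in> U" "z \<noteq> SW b" and deg_y: "sdeg q Bl sig U y = 2"
  shows "sdeg q Bl sig U z = q"
proof -
  obtain i where i: "1 \<le> i" "i \<le> q" and y: "y = SC i (corbit Bl sig i b)"
    using adj(1) unfolding S_adj_SW_iff by blast
  obtain c where c: "c \<noteq> b" "separating q Bl sig c" "corbit Bl sig i c = corbit Bl sig i b"
    using separating_in_cycle[OF rb i b] .
  let ?N = "{u \<in> U. S_adj q Bl sig y u}"
  have "finite ?N"
    using rb finite_S_neighbours_SC y unfolding rooted_bip_colored_def by blast
  moreover have "{SW b, SW c, z} \<subseteq> ?N"
    using separating_SW_neighbour[OF H i b] separating_SW_neighbour[OF H i c(2)] c(3) y adj(2) z(1)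
    by simp
  ultimately have "card {SW b, SW c, z} \<le> 2"
    using deg_y card_mono unfolding sdeg_def by metis
  then have "z = SW c"
    using c(1) z(2) by (auto simp: card_insert_if split: if_splits)
  then show ?thesis
    using sdeg_SW_separating[OF H c(2)] by simp
qed

theorem mainTheorem10:
  fixes q :: nat and Bl Wh :: "'v set" and sig :: "nat \<Rightarrow> 'v \<Rightarrow> 'v" and r :: 'v
    and U :: "'v svert set"
  assumes "3 \<le> q"
    and "rooted_bip_colored q Bl Wh sig r"
    and "is_core q Bl sig r U"
    and "\<forall>w \<in> U. w \<in> SW ` Bl \<longrightarrow>
           sdeg q Bl sig U w < q \<or>
           (\<exists>vs. core_chain q Bl sig r U vs \<and> (w = hd vs \<or> w = last vs) \<and>
                  (\<exists>u \<in> set (butlast (tl vs)). u \<in> SW ` Bl))"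
  shows "SYK q Bl Wh sig"
proof (rule ccontr)
  assume "\<not> SYK q Bl Wh sig"
  then obtain b where b: "separating q Bl sig b"
    using not_SYK_imp_separating[OF assms(2)] by blast
  have H: "separating_part q Bl sig \<subseteq> U"
    using separating_part_subset_core[OF assms(2) _ assms(3)] assms(1) by simp
  have w: "SW b \<in> U" "SW b \<in> SW ` Bl"
    using H b unfolding separating_part_def separating_def by auto
  then obtain vs where "core_chain q Bl sig r U vs" "SW b = hd vs \<or> SW b = last vs"
    "\<exists>u \<in> set (butlast (tl vs)). u \<in> SW ` Bl"
    using assms(4)[rule_format, OF w] sdeg_SW_separating[OF H b] by auto
  then obtain y z where yz: "S_adj q Bl sig (SW b) y" "S_adj q Bl sig y z" "z \<noteq> SW b"
    "chain_vertex q Bl sig r U y" "chain_vertex q Bl sig r U z"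
    using core_chain_end w(2) by metis
  then have "sdeg q Bl sig U z = q" "sdeg q Bl sig U z = 2"
    using sdeg_beyond_separating_neighbour[OF assms(2) H b yz(1,2) _ yz(3)] yz(4,5)
    unfolding chain_vertex_def by auto
  then show False
    using assms(1) by simp
qed

end
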